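(* On the triangle graph on $\{0,1,2\}$ over $\mathbb{F}_2$, let $\nabla$ be the curved QLC determined by $\nabla e^+=e^-\otimes e^-$, $\nabla e^-=e^+\otimes e^+$, viewed as a map $P(\mathrm{Arr})\to P(\mathrm{Arr}^{(2)})$. Define its de Morgan dual connection by $\bar\nabla\omega=\mathrm{Arr}^{(2)}\setminus\nabla(\mathrm{Arr}\setminus\omega)$. Then $\bar\nabla\omega=\nabla\omega\oplus g$ for all $\omega\subseteq\mathrm{Arr}$, where $g=\{0\to1\to0,\ 0\to2\to0,\ 1\to0\to1,\ 1\to2\to1,\ 2\to0\to2,\ 2\to1\to2\}$ is the quantum metric.
   Context: $A=\mathbb{F}_2(\{0,1,2\})$; $\mathrm{Arr}=\{i\to j: i\ne j\}$ (all six arrows), $\mathrm{Arr}^{(2)}$ the set of 2-step paths $x\to y\to z$ along arrows. Over $\mathbb{F}_2$, 1-forms are identified with subsets of $\mathrm{Arr}$ (sum = symmetric difference $\oplus$) and $\Omega^1\otimes_A\Omega^1$ with subsets of $\mathrm{Arr}^{(2)}$, where $(x\to y)\otimes(y'\to z)$ is the path $x\to y\to z$ if $y=y'$ and $0=\emptyset$ otherwise. The bimodule structure is $f\cdot(x\to y)\cdot h=f(x)h(y)(x\to y)$ and ${\rm d} f=\sum_{x\to y}(f(y)+f(x))x\to y$. $e^+=\{0\to1,1\to2,2\to0\}$, $e^-=\{1\to0,2\to1,0\to2\}$. The connection is extended from $e^\pm$ to all 1-forms by $\nabla(f\omega)={\rm d} f\otimes\omega+f\nabla\omega$ (it is additive).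 *)

theory Defs
  imports Main
begin

text \<open>Vertices of the triangle graph, functions A = F_2({0,1,2}) as V => bool
 (True = 1 in F_2), 1-forms as subsets of Arr, elements of Omega^1 (x)_A Omega^1
 as subsets of Arr^(2); sum in F_2 = symmetric difference.\<close>

datatype V = V0 | V1 | V2

type_synonym arrow = "V \<times> V"
type_synonym path2 = "V \<times> V \<times> V"

definition Arr :: "arrow set" where
  "Arr = {(x, y). x \<noteq> y}"

definition Arr2 :: "path2 set" where
  "Arr2 = {(x, y, z). x \<noteq> y \<and> y \<noteq> z}"

definition symdiff :: "'a set \<Rightarrow> 'a set \<Rightarrow> 'a set" (infixl "\<oplus>" 65) where
  "A \<oplus> B = (A - B) \<union> (B - A)"

text \<open>(x->y) (x) (y'->z) = x->y->z if y = y', else 0; extended bilinearly.\<close>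
definition tens :: "arrow set \<Rightarrow> arrow set \<Rightarrow> path2 set" where
  "tens \<omega> \<eta> = {(x, y, z). (x, y) \<in> \<omega> \<and> (y, z) \<in> \<eta>}"

definition lmul1 :: "(V \<Rightarrow> bool) \<Rightarrow> arrow set \<Rightarrow> arrow set" where
  "lmul1 f \<omega> = {(x, y). (x, y) \<in> \<omega> \<and> f x}"

definition lmul2 :: "(V \<Rightarrow> bool) \<Rightarrow> path2 set \<Rightarrow> path2 set" where
  "lmul2 f P = {(x, y, z). (x, y, z) \<in> P \<and> f x}"

text \<open>d f = sum over arrows x->y of (f y + f x) x->y\<close>
definition dd :: "(V \<Rightarrow> bool) \<Rightarrow> arrow set" where
  "dd f = {(x, y). (x, y) \<in> Arr \<and> f x \<noteq> f y}"

definition eplus :: "arrow set" where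
  "eplus = {(V0, V1), (V1, V2), (V2, V0)}"

definition eminus :: "arrow set" where
  "eminus = {(V1, V0), (V2, V1), (V0, V2)}"

definition gmetric :: "path2 set" where
  "gmetric = {(V0, V1, V0), (V0, V2, V0), (V1, V0, V1), (V1, V2, V1), (V2, V0, V2), (V2, V1, V2)}"

definition is_conn :: "(arrow set \<Rightarrow> path2 set) \<Rightarrow> bool" where
  "is_conn nabla \<longleftrightarrow>
     (\<forall>\<omega> \<eta>. \<omega> \<subseteq> Arr \<longrightarrow> \<eta> \<subseteq> Arr \<longrightarrow> nabla (\<omega> \<oplus> \<eta>) = nabla \<omega> \<oplus> nabla \<eta>) \<and>
     (\<forall>f \<omega>. \<omega> \<subseteq> Arr \<longrightarrow> nabla (lmul1 f \<omega>) = tens (dd f) \<omega> \<oplus> lmul2 f (nabla \<omega>)) \<and>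
     nabla eplus = tens eminus eminus \<and>
     nabla eminus = tens eplus eplus"

definition demorgan_dual :: "(arrow set \<Rightarrow> path2 set) \<Rightarrow> arrow set \<Rightarrow> path2 set" where
  "demorgan_dual nabla \<omega> = Arr2 - nabla (Arr - \<omega>)"

end

theory Submission
  imports Defs
begin

text \<open>Complements in \<open>Arr\<close> are symmetric differences with \<open>Arr\<close>, so additivity gives
  \<open>nabla (Arr - \<omega>) = nabla Arr \<oplus> nabla \<omega>\<close>; since the Leibniz rule forces \<open>nabla\<close> to take
  values in \<open>Arr2\<close>, the dual is \<open>Arr2 \<oplus> nabla Arr \<oplus> nabla \<omega>\<close>. Now
  \<open>nabla Arr = nabla e\<^sup>+ \<oplus> nabla e\<^sup>- = e\<^sup>- \<otimes> e\<^sup>- \<oplus> e\<^sup>+ \<otimes> e\<^sup>+\<close> is exactly the set of 2-step paths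
  through three distinct vertices (on a triangle these go consistently around it), and
  removing them from \<open>Arr2\<close> leaves the back-and-forth paths \<open>x \<rightarrow> y \<rightarrow> x\<close>, i.e. the metric.\<close>

lemma symdiff_commute: "A \<oplus> B = B \<oplus> A"
  by (auto simp: symdiff_def)

lemma symdiff_assoc: "A \<oplus> B \<oplus> C = A \<oplus> (B \<oplus> C)"
  by (auto simp: symdiff_def)

lemma symdiff_cancel_right: "A \<oplus> B \<oplus> B = A"
  by (auto simp: symdiff_def)

lemma symdiff_subset: "A \<subseteq> U \<Longrightarrow> B \<subseteq> U \<Longrightarrow> A \<oplus> B \<subseteq> U"
  by (auto simp: symdiff_def)

lemma Diff_eq_symdiff: "B \<subseteq> A \<Longrightarrow> A - B = A \<oplus> B"
  by (auto simp: symdiff_def)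

lemma tens_subset_Arr2: "\<omega> \<subseteq> Arr \<Longrightarrow> \<eta> \<subseteq> Arr \<Longrightarrow> tens \<omega> \<eta> \<subseteq> Arr2"
  by (auto simp: tens_def Arr_def Arr2_def)

lemma lmul2_subset: "lmul2 f P \<subseteq> P"
  by (auto simp: lmul2_def)

lemma dd_subset_Arr: "dd f \<subseteq> Arr"
  by (auto simp: dd_def)

lemma lmul1_subset: "lmul1 f \<omega> \<subseteq> \<omega>"
  by (auto simp: lmul1_def)

lemma eplus_subset_Arr: "eplus \<subseteq> Arr"
  and eminus_subset_Arr: "eminus \<subseteq> Arr"
  by (auto simp: eplus_def eminus_def Arr_def)

lemma Arr_eq_eplus_symdiff_eminus: "Arr = eplus \<oplus> eminus"
proof (rule set_eqI)
  fix p :: arrow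
  obtain x y where "p = (x, y)" by fastforce
  then show "p \<in> Arr \<longleftrightarrow> p \<in> eplus \<oplus> eminus"
    by (cases x; cases y) (auto simp: eplus_def eminus_def symdiff_def Arr_def)
qed

lemma one_form_decomposition:
  assumes "\<omega> \<subseteq> Arr"
  obtains f h where "\<omega> = lmul1 f eplus \<oplus> lmul1 h eminus"
proof
  let ?f = "\<lambda>x. (x, case x of V0 \<Rightarrow> V1 | V1 \<Rightarrow> V2 | V2 \<Rightarrow> V0) \<in> \<omega>"
  let ?h = "\<lambda>x. (x, case x of V0 \<Rightarrow> V2 | V1 \<Rightarrow> V0 | V2 \<Rightarrow> V1) \<in> \<omega>"
  show "\<omega> = lmul1 ?f eplus \<oplus> lmul1 ?h eminus"
  proof (rule set_eqI)
    fix p :: arrow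
    obtain x y where "p = (x, y)" by fastforce
    with assms show "p \<in> \<omega> \<longleftrightarrow> p \<in> lmul1 ?f eplus \<oplus> lmul1 ?h eminus"
      by (cases x; cases y) (auto simp: lmul1_def eplus_def eminus_def symdiff_def Arr_def)
  qed
qed

lemma Arr2_symdiff_tens_eq_gmetric:
  "Arr2 \<oplus> (tens eminus eminus \<oplus> tens eplus eplus) = gmetric"
proof (rule set_eqI)
  fix p :: path2
  obtain x y z where "p = (x, y, z)" by (cases p) fastforce
  then show "p \<in> Arr2 \<oplus> (tens eminus eminus \<oplus> tens eplus eplus) \<longleftrightarrow> p \<in> gmetric"
    by (cases x; cases y; cases z)
      (auto simp: eplus_def eminus_def symdiff_def Arr2_def tens_def gmetric_def)
qed

context
  fixes nabla :: "arrow set \<Rightarrow> path2 set"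
  assumes conn: "is_conn nabla"
begin

lemma conn_symdiff:
  "\<omega> \<subseteq> Arr \<Longrightarrow> \<eta> \<subseteq> Arr \<Longrightarrow> nabla (\<omega> \<oplus> \<eta>) = nabla \<omega> \<oplus> nabla \<eta>"
  using conn by (simp add: is_conn_def)

lemma conn_lmul1:
  "\<omega> \<subseteq> Arr \<Longrightarrow> nabla (lmul1 f \<omega>) = tens (dd f) \<omega> \<oplus> lmul2 f (nabla \<omega>)"
  using conn by (simp add: is_conn_def)

lemma conn_eplus: "nabla eplus = tens eminus eminus"
  and conn_eminus: "nabla eminus = tens eplus eplus"
  using conn by (simp_all add: is_conn_def)

lemma conn_lmul1_eplus_subset_Arr2: "nabla (lmul1 f eplus) \<subseteq> Arr2"
  unfolding conn_lmul1[OF eplus_subset_Arr] conn_eplus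
  by (meson symdiff_subset tens_subset_Arr2 lmul2_subset dd_subset_Arr
      eplus_subset_Arr eminus_subset_Arr order_trans)

lemma conn_lmul1_eminus_subset_Arr2: "nabla (lmul1 f eminus) \<subseteq> Arr2"
  unfolding conn_lmul1[OF eminus_subset_Arr] conn_eminus
  by (meson symdiff_subset tens_subset_Arr2 lmul2_subset dd_subset_Arr
      eplus_subset_Arr eminus_subset_Arr order_trans)

lemma conn_subset_Arr2:
  assumes "\<omega> \<subseteq> Arr"
  shows "nabla \<omega> \<subseteq> Arr2"
proof -
  obtain f h where \<omega>: "\<omega> = lmul1 f eplus \<oplus> lmul1 h eminus"
    using one_form_decomposition[OF assms] .
  have "nabla \<omega> = nabla (lmul1 f eplus) \<oplus> nabla (lmul1 h eminus)"
    unfolding \<omega> using lmul1_subset eplus_subset_Arr eminus_subset_Arr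
    by (meson conn_symdiff order_trans)
  then show ?thesis
    by (simp add: symdiff_subset conn_lmul1_eplus_subset_Arr2 conn_lmul1_eminus_subset_Arr2)
qed

lemma conn_Arr: "nabla Arr = tens eminus eminus \<oplus> tens eplus eplus"
  by (subst Arr_eq_eplus_symdiff_eminus)
    (simp add: conn_symdiff eplus_subset_Arr eminus_subset_Arr conn_eplus conn_eminus)

lemma conn_Diff_Arr:
  assumes "\<omega> \<subseteq> Arr"
  shows "nabla (Arr - \<omega>) = nabla Arr \<oplus> nabla \<omega>"
proof -
  have "nabla Arr = nabla ((Arr - \<omega>) \<oplus> \<omega>)"
    using assms by (simp add: Diff_eq_symdiff symdiff_cancel_right)
  also have "\<dots> = nabla (Arr - \<omega>) \<oplus> nabla \<omega>"
    using assms by (simp add: conn_symdiff)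
  finally show ?thesis
    by (simp add: symdiff_cancel_right)
qed

end

theorem lemma4p9:
  fixes nabla :: "arrow set \<Rightarrow> path2 set"
  assumes "is_conn nabla"
  shows "\<forall>\<omega>. \<omega> \<subseteq> Arr \<longrightarrow> demorgan_dual nabla \<omega> = nabla \<omega> \<oplus> gmetric"
proof (intro allI impI)
  fix \<omega> :: "arrow set"
  assume \<omega>: "\<omega> \<subseteq> Arr"
  have "demorgan_dual nabla \<omega> = Arr2 \<oplus> nabla (Arr - \<omega>)"
    unfolding demorgan_dual_def
    by (rule Diff_eq_symdiff, rule conn_subset_Arr2[OF assms]) auto
  also have "\<dots> = Arr2 \<oplus> nabla Arr \<oplus> nabla \<omega>"
    by (simp add: conn_Diff_Arr[OF assms \<omega>] symdiff_assoc)
  also have "\<dots> = nabla \<omega> \<oplus> gmetric"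
    by (simp add: conn_Arr[OF assms] Arr2_symdiff_tens_eq_gmetric symdiff_commute)
  finally show "demorgan_dual nabla \<omega> = nabla \<omega> \<oplus> gmetric" .
qed

end
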